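(* Let $\mathcal{S}=\{(\bm{x}_i,y_i): i\in[m]\}$ be any sample with $\bm{x}_i\in\mathbb{R}^d$ and $y_i\in\{-1,1\}$, and let $h(\bm{x})=\langle\bm{\theta},\bm{x}\rangle$ be any linear hypothesis ($\bm{\theta}\in\mathbb{R}^d$). Let $l:\mathbb{R}\to\mathbb{R}$ be a loss such that $l_o(x):=(l(x)-l(-x))/2$ is linear. Then $$R_{\mathcal{S},l}(h)=\frac{1}{2}\cdot\frac{1}{m}\sum_{i=1}^m\sum_{\sigma\in\{-1,1\}} l(\sigma h(\bm{x}_i)) + l_o\big(h(\bm{\mu}_{\mathcal{S}})\big).$$
   Context: The empirical $l$-risk is $R_{\mathcal{S},l}(h)=\frac{1}{m}\sum_{i=1}^m l(y_i h(\bm{x}_i))$. The mean operator of $\mathcal{S}$ is $\bm{\mu}_{\mathcal{S}}=\frac{1}{m}\sum_{i=1}^m y_i\bm{x}_i$. *)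

theory Defs
  imports "HOL-Analysis.Analysis"
begin

definition emp_risk :: "nat \<Rightarrow> (nat \<Rightarrow> real ^ 'd) \<Rightarrow> (nat \<Rightarrow> real)
    \<Rightarrow> (real \<Rightarrow> real) \<Rightarrow> (real ^ 'd \<Rightarrow> real) \<Rightarrow> real" where
  "emp_risk m x y l h = (1 / real m) * (\<Sum>i=1..m. l (y i * h (x i)))"

definition mean_op :: "nat \<Rightarrow> (nat \<Rightarrow> real ^ 'd) \<Rightarrow> (nat \<Rightarrow> real) \<Rightarrow> real ^ 'd" where
  "mean_op m x y = (1 / real m) *\<^sub>R (\<Sum>i=1..m. y i *\<^sub>R x i)"

definition odd_part :: "(real \<Rightarrow> real) \<Rightarrow> real \<Rightarrow> real" where
  "odd_part l t = (l t - l (- t)) / 2"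

end

theory Submission
  imports Defs
begin

text \<open>Split the loss into its even and odd parts. On a label \<open>y \<in> {-1, 1}\<close> the even part does
  not see \<open>y\<close>, and it becomes the label-free average over both signs; the odd part is linear, so
  averaging \<open>y\<^sub>i \<cdot> l\<^sub>o(\<langle>\<theta>, x\<^sub>i\<rangle>)\<close> over the sample moves inside \<open>l\<^sub>o\<close> and yields
  \<open>l\<^sub>o(\<langle>\<theta>, \<mu>\<^sub>S\<rangle>)\<close>.\<close>

lemma sign_loss_decomposition:
  fixes l :: "real \<Rightarrow> real"
  assumes "s \<in> {-1, 1}"
  shows "l (s * t) = (1/2) * (\<Sum>\<sigma>\<in>{-1, 1::real}. l (\<sigma> * t)) + s * odd_part l t"
  using assms by (auto simp: odd_part_def field_simps)

lemma linear_odd_part_sum_scaled: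
  assumes "linear (odd_part l)"
  shows "odd_part l (\<Sum>i\<in>A. c i * t i) = (\<Sum>i\<in>A. c i * odd_part l (t i))"
proof -
  have "odd_part l (\<Sum>i\<in>A. c i * t i) = (\<Sum>i\<in>A. odd_part l (c i * t i))"
    by (rule linear_sum[OF assms])
  also have "\<dots> = (\<Sum>i\<in>A. c i * odd_part l (t i))"
    using linear_scale[OF assms] by simp
  finally show ?thesis .
qed

lemma inner_mean_op:
  "\<theta> \<bullet> mean_op m x y = (1 / real m) * (\<Sum>i=1..m. y i * (\<theta> \<bullet> x i))"
  unfolding mean_op_def by (simp add: inner_sum_right)

theorem theorem3:
  fixes m :: nat and x :: "nat \<Rightarrow> real ^ 'd" and y :: "nat \<Rightarrow> real"
    and \<theta> :: "real ^ 'd" and l :: "real \<Rightarrow> real"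
  assumes labels: "\<forall>i\<in>{1..m}. y i \<in> {-1, 1}"
    and lin: "linear (odd_part l)"
  shows "emp_risk m x y l (\<lambda>v. \<theta> \<bullet> v)
       = (1/2) * ((1 / real m) * (\<Sum>i=1..m. \<Sum>\<sigma>\<in>{-1, 1::real}. l (\<sigma> * (\<theta> \<bullet> x i))))
         + odd_part l (\<theta> \<bullet> mean_op m x y)"
proof -
  let ?even = "\<lambda>i. \<Sum>\<sigma>\<in>{-1, 1::real}. l (\<sigma> * (\<theta> \<bullet> x i))"
  have "(\<Sum>i=1..m. l (y i * (\<theta> \<bullet> x i)))
      = (\<Sum>i=1..m. (1/2) * ?even i + y i * odd_part l (\<theta> \<bullet> x i))"
    using labels by (intro sum.cong refl sign_loss_decomposition) auto
  also have "\<dots> = (1/2) * (\<Sum>i=1..m. ?even i) + (\<Sum>i=1..m. y i * odd_part l (\<theta> \<bullet> x i))"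
    by (simp only: sum.distrib sum_distrib_left)
  finally have risk_sum: "(\<Sum>i=1..m. l (y i * (\<theta> \<bullet> x i)))
      = (1/2) * (\<Sum>i=1..m. ?even i) + (\<Sum>i=1..m. y i * odd_part l (\<theta> \<bullet> x i))" .
  have "odd_part l (\<theta> \<bullet> mean_op m x y)
      = (1 / real m) * (\<Sum>i=1..m. y i * odd_part l (\<theta> \<bullet> x i))"
    unfolding inner_mean_op linear_scale[OF lin, simplified] linear_odd_part_sum_scaled[OF lin] ..
  then show ?thesis
    unfolding emp_risk_def risk_sum by (simp add: algebra_simps)
qed

end
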